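(* Let $q$ be a prime power, $s\geq1$, $n=q^{s-1}$, and let $\mathcal{RM}_q(1,s-1)$ be the first order $q$-ary Reed-Muller code. Its extended weight enumerator is \[ W_{\mathcal{RM}_q(1,s-1)}(X,Y,T)=\sum_{r=1}^{s}\left(\prod_{j=0}^{r-1}(T-q^j)\right)\begin{bmatrix} s-1\\ r-1\end{bmatrix}_q Y^n+\sum_{r=0}^{s-1}\left(\prod_{j=0}^{r-1}(T-q^j)\right)q^r\begin{bmatrix} s-1\\ r\end{bmatrix}_q X^{q^{s-1-r}}Y^{q^{s-1}-q^{s-1-r}}. \]
   Context: $\mathcal{RM}_q(1,s-1)$ is the linear $[q^{s-1},s]$ code over $\mathbb{F}_q$ generated by the matrix whose first row is all ones and whose columns, restricted to the remaining $s-1$ rows, run through all vectors of $\mathbb{F}_q^{s-1}$. For a linear $[n,k]$ code $C$ over $\mathbb{F}_q$ and $m\geq1$, the extension code $C\otimes\mathbb{F}_{q^m}$ is the $\mathbb{F}_{q^m}$-linear span of $C$ in $\mathbb{F}_{q^m}^n$. There are (uniquely determined) polynomials $A_w(T)\in\mathbb{Z}[T]$ with $A_w(q^m)$ equal to the number of words of Hamming weight $w$ in $C\otimes\mathbb{F}_{q^m}$ for all $m\geq1$; the extended weight enumerator is $W_C(X,Y,T)=\sum_{w=0}^nA_w(T)X^{n-w}Y^w$. $\begin{bmatrix} a\\ b\end{bmatrix}_q$ is the Gaussian binomial coefficient and the empty product equals $1$. *)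

theory Defs
  imports "HOL-Algebra.Ring" "HOL-Algebra.RingHom" "HOL-Computational_Algebra.Polynomial"
begin

text \<open>Coordinates of RM_q(1,s-1) over the field F: the points of F^(s-1),
  represented as functions nat => carrier F that are zero from index s-1 on.\<close>
definition RM_points :: "('a, 'c) ring_scheme \<Rightarrow> nat \<Rightarrow> (nat \<Rightarrow> 'a) set" where
  "RM_points F s = {v. (\<forall>i<s - 1. v i \<in> carrier F) \<and> (\<forall>i\<ge>s - 1. v i = \<zero>\<^bsub>F\<^esub>)}"

text \<open>The code RM_q(1,s-1) over F: the F-linear span of the rows of its generator
  matrix (first row all ones, remaining rows the coordinates of the points).
  Words are functions on the coordinate set, set to zero outside it.\<close>
definition RM_code :: "('a, 'c) ring_scheme \<Rightarrow> nat \<Rightarrow> ((nat \<Rightarrow> 'a) \<Rightarrow> 'a) set" where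
  "RM_code F s = {c. \<exists>a0 \<in> carrier F. \<exists>a \<in> {0..<s - 1} \<rightarrow> carrier F.
      (\<forall>v \<in> RM_points F s. c v = a0 \<oplus>\<^bsub>F\<^esub> (\<Oplus>\<^bsub>F\<^esub> i\<in>{0..<s - 1}. a i \<otimes>\<^bsub>F\<^esub> v i)) \<and>
      (\<forall>v. v \<notin> RM_points F s \<longrightarrow> c v = \<zero>\<^bsub>F\<^esub>)}"

text \<open>The extension code C \<otimes> K: the K-linear span of the image of C under the field
  embedding sigma : F \<rightarrow> K.\<close>
definition ext_code :: "('a, 'c) ring_scheme \<Rightarrow> ('b, 'd) ring_scheme \<Rightarrow> ('a \<Rightarrow> 'b)
    \<Rightarrow> (nat \<Rightarrow> 'a) set \<Rightarrow> ((nat \<Rightarrow> 'a) \<Rightarrow> 'a) set \<Rightarrow> ((nat \<Rightarrow> 'a) \<Rightarrow> 'b) set" where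
  "ext_code F K \<sigma> P C = {c. \<exists>S. S \<subseteq> C \<and> finite S \<and> (\<exists>l \<in> S \<rightarrow> carrier K.
      (\<forall>v \<in> P. c v = (\<Oplus>\<^bsub>K\<^esub> c'\<in>S. l c' \<otimes>\<^bsub>K\<^esub> \<sigma> (c' v))) \<and>
      (\<forall>v. v \<notin> P \<longrightarrow> c v = \<zero>\<^bsub>K\<^esub>))}"

definition ham_wt :: "('b, 'd) ring_scheme \<Rightarrow> (nat \<Rightarrow> 'a) set \<Rightarrow> ((nat \<Rightarrow> 'a) \<Rightarrow> 'b) \<Rightarrow> nat" where
  "ham_wt K P c = card {v \<in> P. c v \<noteq> \<zero>\<^bsub>K\<^esub>}"

text \<open>The polynomial A_w(T) of RM_q(1,s-1) over F (q = |F|): the integer polynomial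
  whose value at q^m is the number of weight-w words of the extension code over any
  field K with q^m elements (carrier taken in nat, which loses nothing up to
  isomorphism) and any embedding F \<rightarrow> K, for all m \<ge> 1.\<close>
definition RM_ext_A :: "('a, 'c) ring_scheme \<Rightarrow> nat \<Rightarrow> nat \<Rightarrow> int poly" where
  "RM_ext_A F s w = (THE A. \<forall>m\<ge>1. \<forall>(K :: nat ring) \<sigma>.
      field K \<and> card (carrier K) = card (carrier F) ^ m \<and> \<sigma> \<in> ring_hom F K \<longrightarrow>
      int (card {c \<in> ext_code F K \<sigma> (RM_points F s) (RM_code F s).
                   ham_wt K (RM_points F s) c = w}) = poly A (int (card (carrier F) ^ m)))"

definition RM_ext_W :: "('a, 'c) ring_scheme \<Rightarrow> nat \<Rightarrow> real \<Rightarrow> real \<Rightarrow> real \<Rightarrow> real" where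
  "RM_ext_W F s X Y T = (\<Sum>w = 0..card (carrier F) ^ (s - 1).
      poly (map_poly real_of_int (RM_ext_A F s w)) T * X ^ (card (carrier F) ^ (s - 1) - w) * Y ^ w)"

definition gauss_binom :: "nat \<Rightarrow> nat \<Rightarrow> nat \<Rightarrow> real" where
  "gauss_binom q a b = (if b \<le> a then
      (\<Prod>i<b. (real q ^ (a - i) - 1) / (real q ^ (i + 1) - 1)) else 0)"

end

theory Submission
  imports Defs "HOL-Algebra.Algebraic_Closure" "HOL-Algebra.Weak_Morphisms"
    "HOL-Algebra.Multiplicative_Group"
begin

text \<open>
  Let \<open>\<sigma> : F \<rightarrow> K\<close> embed \<open>F = \<bbbF>\<^sub>q\<close> into a finite field \<open>K\<close>. Every word of
  \<open>RM\<^sub>q(1,k) \<otimes> K\<close> is \<open>v \<mapsto> a\<^sub>0 + \<Sum>\<^sub>i a\<^sub>i \<sigma>(v\<^sub>i)\<close> for a unique \<open>(a\<^sub>0, a) \<in> K \<times> K\<^sup>k\<close>.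
  The map \<open>v \<mapsto> \<Sum>\<^sub>i a\<^sub>i \<sigma>(v\<^sub>i)\<close> is \<open>F\<close>-linear, so its image is an \<open>F\<close>-subspace of \<open>K\<close> of
  size \<open>q\<^sup>r\<close> and all its fibres have size \<open>q\<^sup>k\<^sup>-\<^sup>r\<close>: the word has weight \<open>q\<^sup>k - q\<^sup>k\<^sup>-\<^sup>r\<close> if
  \<open>-a\<^sub>0\<close> lies in the image and weight \<open>q\<^sup>k\<close> otherwise. Adding one coordinate to \<open>a\<close>
  either keeps the image or enlarges it by a factor \<open>q\<close>, which shows that the number
  of \<open>a \<in> K\<^sup>k\<close> of rank \<open>r\<close> is \<open>[k choose r]\<^sub>q \<Prod>\<^sub>j\<^sub><\<^sub>r (|K| - q\<^sup>j)\<close>. Hence each weight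
  is counted by a polynomial in \<open>|K|\<close>; since finite extensions of \<open>F\<close> of arbitrarily
  large degree exist (inside an algebraic closure), these polynomials are the \<open>A\<^sub>w\<close>.
\<close>

no_notation var (\<open>X\<index>\<close>)

lemma field_card_ge_2:
  assumes "field F" and "finite (carrier F)"
  shows "card (carrier F) \<ge> 2"
proof -
  interpret field F by fact
  have "card {\<zero>\<^bsub>F\<^esub>, \<one>\<^bsub>F\<^esub>} \<le> card (carrier F)"
    using assms(2) by (intro card_mono) auto
  thus ?thesis using one_not_zero by simp
qed

locale finite_field_embedding = F: field F + K: field K
  for F :: "('a, 'c) ring_scheme" and K :: "('b, 'd) ring_scheme" (structure) +
  fixes \<sigma> :: "'a \<Rightarrow> 'b"
  assumes hom: "\<sigma> \<in> ring_hom F K"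
    and finite_F: "finite (carrier F)" and finite_K: "finite (carrier K)"
begin

sublocale H: ring_hom_cring F K \<sigma>
  using hom by (intro ring_hom_cringI ring_hom_ringI2 F.cring_axioms K.cring_axioms
      F.ring_axioms K.ring_axioms)

abbreviation q where "q \<equiv> card (carrier F)"
abbreviation Q where "Q \<equiv> card (carrier K)"

lemma q_ge_2: "q \<ge> 2"
  using field_card_ge_2 F.field_axioms finite_F by blast

definition points :: "nat \<Rightarrow> (nat \<Rightarrow> 'a) set" where
  "points k = {v. (\<forall>i<k. v i \<in> carrier F) \<and> (\<forall>i\<ge>k. v i = \<zero>\<^bsub>F\<^esub>)}"

lemma RM_points_Suc: "RM_points F (Suc k) = points k"
  by (simp add: RM_points_def points_def)

lemma points_carrier: "v \<in> points k \<Longrightarrow> v i \<in> carrier F"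
  by (cases "i < k") (auto simp: points_def)

lemma zero_point: "(\<lambda>_. \<zero>\<^bsub>F\<^esub>) \<in> points k"
  by (simp add: points_def)

lemma points_Suc: "points (Suc k) = (\<lambda>(w, c). w(k := c)) ` (points k \<times> carrier F)"
proof (intro equalityI subsetI)
  fix v assume v: "v \<in> points (Suc k)"
  have "v(k := \<zero>\<^bsub>F\<^esub>) \<in> points k" "v k \<in> carrier F" using v by (auto simp: points_def)
  moreover have "v = (v(k := \<zero>\<^bsub>F\<^esub>))(k := v k)" by simp
  ultimately show "v \<in> (\<lambda>(w, c). w(k := c)) ` (points k \<times> carrier F)"
    by (intro image_eqI[where x="(v(k := \<zero>\<^bsub>F\<^esub>), v k)"]) auto
qed (auto simp: points_def less_Suc_eq)

lemma inj_on_points_Suc: "inj_on (\<lambda>(w, c). w(k := c)) (points k \<times> carrier F)"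
proof (rule inj_onI, clarify)
  fix w c w' c' assume w: "w \<in> points k" "w' \<in> points k" and e: "w(k := c) = w'(k := c')"
  have "w i = w' i" for i
    using fun_cong[OF e, of i] w by (cases "i = k") (auto simp: points_def)
  thus "w = w' \<and> c = c'" using fun_cong[OF e, of k] by auto
qed

lemma finite_points: "finite (points k)" and card_points: "card (points k) = q ^ k"
proof -
  have "finite (points k) \<and> card (points k) = q ^ k"
  proof (induct k)
    case 0
    have "points 0 = {\<lambda>_. \<zero>\<^bsub>F\<^esub>}" by (auto simp: points_def)
    thus ?case by simp
  next
    case (Suc k)
    thus ?case using inj_on_points_Suc[of k] finite_F
      by (simp add: points_Suc card_image card_cartesian_product)
  qed
  thus "finite (points k)" "card (points k) = q ^ k" by auto
qed

section \<open>Linear forms \<open>F\<^sup>k \<rightarrow> K\<close> and \<open>F\<close>-subspaces of \<open>K\<close>\<close>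

definition lin_form :: "nat \<Rightarrow> (nat \<Rightarrow> 'b) \<Rightarrow> (nat \<Rightarrow> 'a) \<Rightarrow> 'b" where
  "lin_form k a v = (\<Oplus>i\<in>{0..<k}. a i \<otimes> \<sigma> (v i))"

definition lin_image :: "nat \<Rightarrow> (nat \<Rightarrow> 'b) \<Rightarrow> 'b set" where
  "lin_image k a = lin_form k a ` points k"

definition F_subspace :: "'b set \<Rightarrow> bool" where
  "F_subspace W \<longleftrightarrow> W \<subseteq> carrier K \<and> \<zero> \<in> W \<and> (\<forall>x\<in>W. \<forall>y\<in>W. x \<oplus> y \<in> W)
     \<and> (\<forall>c\<in>carrier F. \<forall>x\<in>W. \<sigma> c \<otimes> x \<in> W)"

definition adjoin :: "'b set \<Rightarrow> 'b \<Rightarrow> 'b set" where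
  "adjoin W b = {x \<oplus> b \<otimes> \<sigma> c | x c. x \<in> W \<and> c \<in> carrier F}"

lemma lin_form_closed:
  "a \<in> {0..<k} \<rightarrow> carrier K \<Longrightarrow> v \<in> points k \<Longrightarrow> lin_form k a v \<in> carrier K"
  unfolding lin_form_def by (intro K.finsum_closed) (auto simp: points_carrier Pi_def)

lemma lin_form_fun_upd:
  assumes a: "a \<in> {0..<Suc k} \<rightarrow> carrier K" and w: "w \<in> points k" and c: "c \<in> carrier F"
  shows "lin_form (Suc k) a (w(k := c)) = lin_form k a w \<oplus> a k \<otimes> \<sigma> c"
proof -
  have "lin_form (Suc k) a (w(k := c)) = (\<Oplus>i\<in>insert k {0..<k}. a i \<otimes> \<sigma> ((w(k := c)) i))"
    unfolding lin_form_def by (simp add: atLeast0_lessThan_Suc)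
  also have "\<dots> = a k \<otimes> \<sigma> c \<oplus> (\<Oplus>i\<in>{0..<k}. a i \<otimes> \<sigma> ((w(k := c)) i))"
    using a c w by (subst K.finsum_insert) (auto simp: points_carrier Pi_def)
  also have "(\<Oplus>i\<in>{0..<k}. a i \<otimes> \<sigma> ((w(k := c)) i)) = lin_form k a w"
    unfolding lin_form_def
    by (intro K.finsum_cong') (use a w in \<open>auto simp: points_carrier Pi_def\<close>)
  finally have "lin_form (Suc k) a (w(k := c)) = a k \<otimes> \<sigma> c \<oplus> lin_form k a w" .
  moreover have "a k \<in> carrier K" "lin_form k a w \<in> carrier K"
    using a w by (auto intro!: lin_form_closed)
  ultimately show ?thesis using c by (simp add: K.a_comm)
qed

lemma lin_form_coeff_upd:
  "a \<in> {0..<k} \<rightarrow> carrier K \<Longrightarrow> v \<in> points k \<Longrightarrow> lin_form k (a(k := b)) v = lin_form k a v"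
  unfolding lin_form_def by (intro K.finsum_cong') (auto simp: Pi_def points_carrier)

lemma lin_image_0: "lin_image 0 a = {\<zero>}"
  by (auto simp: lin_image_def lin_form_def points_def)

lemma lin_image_Suc:
  assumes a: "a \<in> {0..<Suc k} \<rightarrow> carrier K"
  shows "lin_image (Suc k) a = adjoin (lin_image k a) (a k)"
  using lin_form_fun_upd[OF a]
  by (fastforce simp: lin_image_def adjoin_def points_Suc image_iff)

lemma finite_lin_image: "finite (lin_image k a)"
  unfolding lin_image_def using finite_points by simp

lemma F_subspace_uminus: "F_subspace W \<Longrightarrow> x \<in> W \<Longrightarrow> \<ominus> x \<in> W"
proof -
  assume W: "F_subspace W" and x: "x \<in> W"
  have "\<ominus>\<^bsub>F\<^esub> \<one>\<^bsub>F\<^esub> \<in> carrier F" by simp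
  hence "\<sigma> (\<ominus>\<^bsub>F\<^esub> \<one>\<^bsub>F\<^esub>) \<otimes> x \<in> W" using W x unfolding F_subspace_def by blast
  moreover have "x \<in> carrier K" using W x by (auto simp: F_subspace_def)
  ultimately show ?thesis by (simp add: K.l_minus)
qed

lemma F_subspace_cancel_scalar:
  assumes W: "F_subspace W" and d: "d \<in> carrier F" "d \<noteq> \<zero>\<^bsub>F\<^esub>"
    and b: "b \<in> carrier K" and db: "\<sigma> d \<otimes> b \<in> W"
  shows "b \<in> W"
proof -
  have inv: "inv\<^bsub>F\<^esub> d \<in> carrier F" "inv\<^bsub>F\<^esub> d \<otimes>\<^bsub>F\<^esub> d = \<one>\<^bsub>F\<^esub>"
    using d F.field_Units by auto
  have "\<sigma> (inv\<^bsub>F\<^esub> d) \<otimes> (\<sigma> d \<otimes> b) = (\<sigma> (inv\<^bsub>F\<^esub> d) \<otimes> \<sigma> d) \<otimes> b"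
    using inv d b by (simp add: K.m_assoc)
  also have "\<dots> = \<sigma> (inv\<^bsub>F\<^esub> d \<otimes>\<^bsub>F\<^esub> d) \<otimes> b"
    using inv d by (metis H.hom_mult)
  also have "\<dots> = b" using inv b by simp
  finally show ?thesis using W db inv by (metis F_subspace_def)
qed

lemma F_subspace_adjoin:
  assumes W: "F_subspace W" and b: "b \<in> carrier K"
  shows "F_subspace (adjoin W b)"
proof -
  have Wc: "W \<subseteq> carrier K" using W by (simp add: F_subspace_def)
  have "\<zero> = \<zero> \<oplus> b \<otimes> \<sigma> \<zero>\<^bsub>F\<^esub>" using b by simp
  hence "\<zero> \<in> adjoin W b" using W unfolding adjoin_def F_subspace_def by blast
  moreover have "x \<oplus> y \<in> adjoin W b" if x: "x \<in> adjoin W b" and y: "y \<in> adjoin W b" for x y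
  proof -
    obtain x1 c1 x2 c2 where h: "x1 \<in> W" "c1 \<in> carrier F" "x = x1 \<oplus> b \<otimes> \<sigma> c1"
      "x2 \<in> W" "c2 \<in> carrier F" "y = x2 \<oplus> b \<otimes> \<sigma> c2"
      using x y unfolding adjoin_def by blast
    have "x1 \<in> carrier K" "x2 \<in> carrier K" "\<sigma> c1 \<in> carrier K" "\<sigma> c2 \<in> carrier K"
      using h Wc by auto
    hence "x \<oplus> y = (x1 \<oplus> x2) \<oplus> b \<otimes> (\<sigma> c1 \<oplus> \<sigma> c2)"
      unfolding h(3,6) using b by algebra
    hence "x \<oplus> y = (x1 \<oplus> x2) \<oplus> b \<otimes> \<sigma> (c1 \<oplus>\<^bsub>F\<^esub> c2)" using h by simp
    moreover have "x1 \<oplus> x2 \<in> W" using W h by (simp add: F_subspace_def)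
    ultimately show ?thesis using h unfolding adjoin_def by blast
  qed
  moreover have "\<sigma> d \<otimes> x \<in> adjoin W b" if d: "d \<in> carrier F" and x: "x \<in> adjoin W b" for d x
  proof -
    obtain x1 c1 where h: "x1 \<in> W" "c1 \<in> carrier F" "x = x1 \<oplus> b \<otimes> \<sigma> c1"
      using x unfolding adjoin_def by blast
    have "x1 \<in> carrier K" "\<sigma> c1 \<in> carrier K" "\<sigma> d \<in> carrier K"
      using h d Wc by auto
    hence "\<sigma> d \<otimes> x = \<sigma> d \<otimes> x1 \<oplus> b \<otimes> (\<sigma> d \<otimes> \<sigma> c1)"
      unfolding h(3) using b by algebra
    hence "\<sigma> d \<otimes> x = \<sigma> d \<otimes> x1 \<oplus> b \<otimes> \<sigma> (d \<otimes>\<^bsub>F\<^esub> c1)" using h d by simp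
    moreover have "\<sigma> d \<otimes> x1 \<in> W" using W h d by (simp add: F_subspace_def)
    ultimately show ?thesis using h d unfolding adjoin_def by blast
  qed
  moreover have "adjoin W b \<subseteq> carrier K" using Wc b by (auto simp: adjoin_def)
  ultimately show ?thesis by (simp add: F_subspace_def)
qed

lemma adjoin_mono: "U \<subseteq> W \<Longrightarrow> adjoin U b \<subseteq> adjoin W b"
  by (auto simp: adjoin_def)

lemma adjoin_of_mem:
  assumes W: "F_subspace W" and b: "b \<in> W"
  shows "adjoin W b = W"
proof (intro equalityI subsetI)
  fix x assume "x \<in> adjoin W b"
  then obtain x1 c1 where h: "x1 \<in> W" "c1 \<in> carrier F" "x = x1 \<oplus> b \<otimes> \<sigma> c1"
    by (auto simp: adjoin_def)
  have "\<sigma> c1 \<otimes> b \<in> W" "b \<in> carrier K" using W h b by (auto simp: F_subspace_def)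
  hence "b \<otimes> \<sigma> c1 \<in> W" using h by (simp add: K.m_comm)
  thus "x \<in> W" using W h by (simp add: F_subspace_def)
next
  fix x assume x: "x \<in> W"
  moreover have "x \<in> carrier K" "b \<in> carrier K" using W b x by (auto simp: F_subspace_def)
  ultimately have "x = x \<oplus> b \<otimes> \<sigma> \<zero>\<^bsub>F\<^esub>" by simp
  thus "x \<in> adjoin W b" unfolding adjoin_def using x by blast
qed

lemma card_adjoin:
  assumes W: "F_subspace W" and fin: "finite W" and b: "b \<in> carrier K" "b \<notin> W"
  shows "card (adjoin W b) = q * card W"
proof -
  have Wc: "W \<subseteq> carrier K" using W by (simp add: F_subspace_def)
  have "inj_on (\<lambda>(x, c). x \<oplus> b \<otimes> \<sigma> c) (W \<times> carrier F)"
  proof (rule inj_onI, clarify)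
    fix x c x' c' assume h: "x \<in> W" "c \<in> carrier F" "x' \<in> W" "c' \<in> carrier F"
      and e: "x \<oplus> b \<otimes> \<sigma> c = x' \<oplus> b \<otimes> \<sigma> c'"
    have xc: "x \<in> carrier K" "x' \<in> carrier K" "\<sigma> c \<in> carrier K" "\<sigma> c' \<in> carrier K"
      using h Wc by auto
    have "\<sigma> (c \<ominus>\<^bsub>F\<^esub> c') = \<sigma> c \<oplus> \<ominus> \<sigma> c'" using h by (simp add: F.minus_eq)
    hence "\<sigma> (c \<ominus>\<^bsub>F\<^esub> c') \<otimes> b = (x \<oplus> b \<otimes> \<sigma> c) \<oplus> \<ominus> (b \<otimes> \<sigma> c') \<oplus> \<ominus> x"
      using xc b by algebra
    also have "\<dots> = x' \<oplus> \<ominus> x"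
      unfolding e using xc b by algebra
    also have "\<dots> \<in> W" using W h F_subspace_uminus by (simp add: F_subspace_def)
    finally have dW: "\<sigma> (c \<ominus>\<^bsub>F\<^esub> c') \<otimes> b \<in> W" .
    have c: "c = c'"
    proof (rule ccontr)
      assume "c \<noteq> c'"
      hence "c \<ominus>\<^bsub>F\<^esub> c' \<noteq> \<zero>\<^bsub>F\<^esub>" using h by simp
      thus False using F_subspace_cancel_scalar[OF W _ _ b(1) dW] b(2) h by simp
    qed
    hence "x = x'" using e h xc b by (simp add: K.add.right_cancel)
    thus "x = x' \<and> c = c'" using c by simp
  qed
  moreover have "adjoin W b = (\<lambda>(x, c). x \<oplus> b \<otimes> \<sigma> c) ` (W \<times> carrier F)"
    unfolding adjoin_def by auto
  ultimately show ?thesis by (simp add: card_image card_cartesian_product mult.commute)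
qed

lemma F_subspace_lin_image: "a \<in> {0..<k} \<rightarrow> carrier K \<Longrightarrow> F_subspace (lin_image k a)"
proof (induct k arbitrary: a)
  case 0
  thus ?case by (simp add: lin_image_0 F_subspace_def)
next
  case (Suc k)
  hence "a \<in> {0..<k} \<rightarrow> carrier K" "a k \<in> carrier K" by auto
  thus ?case using Suc lin_image_Suc F_subspace_adjoin by simp
qed

text \<open>An \<open>F\<close>-subspace of \<open>K\<close> is reached from \<open>{0}\<close> by adjoining elements one at a time.\<close>

lemma F_subspace_card_power:
  assumes W: "F_subspace W"
  shows "\<exists>r. card W = q ^ r"
proof -
  have finW: "finite W" using W finite_K finite_subset by (auto simp: F_subspace_def)
  have "\<exists>r'. card W = q ^ r'" if "F_subspace U" "U \<subseteq> W" "card U = q ^ r" for U r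
    using that
  proof (induct "card W - card U" arbitrary: U r rule: less_induct)
    case less
    show ?case
    proof (cases "U = W")
      case True thus ?thesis using less by blast
    next
      case False
      then obtain b where b: "b \<in> W" "b \<notin> U" using less.prems(2) by blast
      have bc: "b \<in> carrier K" using b W by (auto simp: F_subspace_def)
      have finU: "finite U" using less.prems(2) finW finite_subset by blast
      have sub: "adjoin U b \<subseteq> W"
        using adjoin_mono[OF less.prems(2), of b] adjoin_of_mem[OF W b(1)] by simp
      have c: "card (adjoin U b) = q ^ Suc r"
        using card_adjoin[OF less.prems(1) finU bc b(2)] less.prems(3) by simp
      hence "card U < card (adjoin U b)" using less.prems(3) q_ge_2 by simp
      moreover have "card (adjoin U b) \<le> card W" using sub finW by (simp add: card_mono)
      ultimately have "card W - card (adjoin U b) < card W - card U" by linarith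
      thus ?thesis using less.hyps F_subspace_adjoin[OF less.prems(1) bc] sub c by blast
    qed
  qed
  from this[of "{\<zero>}" 0] show ?thesis using W by (auto simp: F_subspace_def)
qed

definition rank :: "nat \<Rightarrow> (nat \<Rightarrow> 'b) \<Rightarrow> nat" where
  "rank k a = (THE r. card (lin_image k a) = q ^ r)"

lemma card_lin_image:
  assumes a: "a \<in> {0..<k} \<rightarrow> carrier K"
  shows "card (lin_image k a) = q ^ rank k a"
proof -
  obtain r where r: "card (lin_image k a) = q ^ r"
    using F_subspace_card_power[OF F_subspace_lin_image[OF a]] by blast
  have "rank k a = r"
    unfolding rank_def using r q_ge_2 by (intro the_equality) (auto simp: power_inject_exp)
  thus ?thesis using r by simp
qed

lemma rank_le: "a \<in> {0..<k} \<rightarrow> carrier K \<Longrightarrow> rank k a \<le> k"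
proof -
  assume a: "a \<in> {0..<k} \<rightarrow> carrier K"
  have "q ^ rank k a \<le> q ^ k"
    using card_lin_image[OF a] card_image_le[OF finite_points] card_points
    by (metis lin_image_def)
  thus ?thesis using q_ge_2 by (simp add: power_le_imp_le_exp)
qed

lemma rank_eqI: "a \<in> {0..<k} \<rightarrow> carrier K \<Longrightarrow> card (lin_image k a) = q ^ r \<Longrightarrow> rank k a = r"
  using card_lin_image[of a k] q_ge_2 by (simp add: power_inject_exp)

lemma rank_Suc:
  assumes a: "a \<in> {0..<Suc k} \<rightarrow> carrier K"
  shows "rank (Suc k) a = (if a k \<in> lin_image k a then rank k a else Suc (rank k a))"
proof -
  have a': "a \<in> {0..<k} \<rightarrow> carrier K" "a k \<in> carrier K" using a by auto
  note W = F_subspace_lin_image[OF a'(1)]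
  show ?thesis
    using card_lin_image[OF a'(1)] lin_image_Suc[OF a] adjoin_of_mem[OF W]
      card_adjoin[OF W finite_lin_image a'(2)]
    by (auto intro!: rank_eqI[OF a])
qed

definition point_add :: "(nat \<Rightarrow> 'a) \<Rightarrow> (nat \<Rightarrow> 'a) \<Rightarrow> nat \<Rightarrow> 'a" where
  "point_add v w = (\<lambda>i. v i \<oplus>\<^bsub>F\<^esub> w i)"

definition point_neg :: "(nat \<Rightarrow> 'a) \<Rightarrow> nat \<Rightarrow> 'a" where
  "point_neg v = (\<lambda>i. \<ominus>\<^bsub>F\<^esub> v i)"

lemma point_add_points: "v \<in> points k \<Longrightarrow> w \<in> points k \<Longrightarrow> point_add v w \<in> points k"
  by (auto simp: point_add_def points_def)

lemma point_neg_points: "v \<in> points k \<Longrightarrow> point_neg v \<in> points k"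
  by (auto simp: point_neg_def points_def)

lemma lin_form_point_add:
  assumes a: "a \<in> {0..<k} \<rightarrow> carrier K" and v: "v \<in> points k" and w: "w \<in> points k"
  shows "lin_form k a (point_add v w) = lin_form k a v \<oplus> lin_form k a w"
proof -
  have "lin_form k a (point_add v w) = (\<Oplus>i\<in>{0..<k}. a i \<otimes> \<sigma> (v i) \<oplus> a i \<otimes> \<sigma> (w i))"
    unfolding lin_form_def point_add_def using a v w
    by (intro K.finsum_cong') (auto simp: Pi_def points_carrier K.r_distr)
  also have "\<dots> = lin_form k a v \<oplus> lin_form k a w"
    unfolding lin_form_def using a v w by (intro K.finsum_addf) (auto simp: Pi_def points_carrier)
  finally show ?thesis .
qed

lemma lin_form_zero_point: "a \<in> {0..<k} \<rightarrow> carrier K \<Longrightarrow> lin_form k a (\<lambda>_. \<zero>\<^bsub>F\<^esub>) = \<zero>"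
proof -
  assume a: "a \<in> {0..<k} \<rightarrow> carrier K"
  have "lin_form k a (\<lambda>_. \<zero>\<^bsub>F\<^esub>) = (\<Oplus>i\<in>{0..<k}. \<zero>)"
    unfolding lin_form_def using a by (intro K.finsum_cong') (auto simp: Pi_def)
  thus ?thesis by simp
qed

lemma lin_form_point_neg:
  assumes a: "a \<in> {0..<k} \<rightarrow> carrier K" and v: "v \<in> points k"
  shows "lin_form k a (point_neg v) = \<ominus> lin_form k a v"
proof -
  have "point_add v (point_neg v) = (\<lambda>_. \<zero>\<^bsub>F\<^esub>)"
    using v by (auto simp: point_add_def point_neg_def points_carrier F.r_neg)
  hence "lin_form k a v \<oplus> lin_form k a (point_neg v) = \<zero>"
    using lin_form_point_add[OF a v point_neg_points[OF v]] lin_form_zero_point[OF a] by simp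
  thus ?thesis using lin_form_closed[OF a v] lin_form_closed[OF a point_neg_points[OF v]]
    by (metis K.add.inv_closed K.add.inv_equality K.a_comm K.minus_minus)
qed

definition fibre :: "nat \<Rightarrow> (nat \<Rightarrow> 'b) \<Rightarrow> 'b \<Rightarrow> (nat \<Rightarrow> 'a) set" where
  "fibre k a t = {v \<in> points k. lin_form k a v = t}"

lemma fibre_eq_translate:
  assumes a: "a \<in> {0..<k} \<rightarrow> carrier K" and v0: "v0 \<in> points k"
  shows "fibre k a (lin_form k a v0) = point_add v0 ` fibre k a \<zero>"
proof (intro equalityI subsetI)
  fix v assume "v \<in> fibre k a (lin_form k a v0)"
  hence v: "v \<in> points k" "lin_form k a v = lin_form k a v0" by (auto simp: fibre_def)
  let ?u = "point_add (point_neg v0) v"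
  have "?u \<in> points k" using v v0 by (intro point_add_points point_neg_points)
  moreover have "lin_form k a ?u = \<zero>"
    using lin_form_point_add[OF a point_neg_points[OF v0] v(1)] lin_form_point_neg[OF a v0] v
      lin_form_closed[OF a v(1)]
    by (simp add: K.l_neg)
  moreover have "v = point_add v0 ?u"
    using v v0 by (auto simp: point_add_def point_neg_def points_carrier F.a_assoc[symmetric]
        F.r_neg intro!: ext)
  ultimately show "v \<in> point_add v0 ` fibre k a \<zero>" by (auto simp: fibre_def)
next
  fix v assume "v \<in> point_add v0 ` fibre k a \<zero>"
  then obtain u where u: "u \<in> points k" "lin_form k a u = \<zero>" "v = point_add v0 u"
    by (auto simp: fibre_def)
  thus "v \<in> fibre k a (lin_form k a v0)"
    using lin_form_point_add[OF a v0 u(1)] lin_form_closed[OF a v0] v0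
    by (auto simp: fibre_def point_add_points)
qed

lemma card_fibre_eq:
  assumes a: "a \<in> {0..<k} \<rightarrow> carrier K" and t: "t \<in> lin_image k a"
  shows "card (fibre k a t) = card (fibre k a \<zero>)"
proof -
  obtain v0 where v0: "v0 \<in> points k" "t = lin_form k a v0" using t by (auto simp: lin_image_def)
  have "inj_on (point_add v0) (fibre k a \<zero>)"
  proof (rule inj_onI)
    fix u u' assume "u \<in> fibre k a \<zero>" "u' \<in> fibre k a \<zero>" and e: "point_add v0 u = point_add v0 u'"
    hence uu: "u \<in> points k" "u' \<in> points k" by (auto simp: fibre_def)
    show "u = u'"
    proof
      fix i
      have "v0 i \<oplus>\<^bsub>F\<^esub> u i = v0 i \<oplus>\<^bsub>F\<^esub> u' i" using fun_cong[OF e, of i] by (simp add: point_add_def)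
      thus "u i = u' i" using uu v0 points_carrier by (metis F.a_comm F.add.right_cancel)
    qed
  qed
  thus ?thesis using fibre_eq_translate[OF a v0(1)] v0(2) by (simp add: card_image)
qed

lemma card_fibre:
  assumes a: "a \<in> {0..<k} \<rightarrow> carrier K" and t: "t \<in> lin_image k a"
  shows "card (fibre k a t) = q ^ (k - rank k a)"
proof -
  have "points k = (\<Union>t\<in>lin_image k a. fibre k a t)"
    by (auto simp: fibre_def lin_image_def)
  hence "q ^ k = card (\<Union>t\<in>lin_image k a. fibre k a t)" using card_points[of k] by metis
  also have "\<dots> = (\<Sum>t\<in>lin_image k a. card (fibre k a t))"
    using finite_lin_image finite_points by (intro card_UN_disjoint) (auto simp: fibre_def)
  also have "\<dots> = q ^ rank k a * card (fibre k a \<zero>)"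
    using card_fibre_eq[OF a] card_lin_image[OF a] by simp
  finally have "q ^ rank k a * q ^ (k - rank k a) = q ^ rank k a * card (fibre k a \<zero>)"
    using rank_le[OF a] by (simp flip: power_add)
  hence "card (fibre k a \<zero>) = q ^ (k - rank k a)" using q_ge_2 by simp
  thus ?thesis using card_fibre_eq[OF a t] by simp
qed

end

section \<open>Counting coefficient vectors by rank\<close>

lemma card_PiE_Suc_filter:
  assumes B: "finite B"
  shows "card {f \<in> PiE {0..<Suc k} (\<lambda>_. B). P f} =
         (\<Sum>a \<in> PiE {0..<k} (\<lambda>_. B). card {b \<in> B. P (a(k := b))})"
proof -
  let ?S = "SIGMA a : PiE {0..<k} (\<lambda>_. B). {b \<in> B. P (a(k := b))}"
  have "{f \<in> PiE {0..<Suc k} (\<lambda>_. B). P f} = (\<lambda>(a, b). a(k := b)) ` ?S"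
  proof (intro equalityI subsetI)
    fix f assume f: "f \<in> {f \<in> PiE {0..<Suc k} (\<lambda>_. B). P f}"
    have "f(k := undefined) \<in> PiE {0..<k} (\<lambda>_. B)"
      using f by (auto simp: PiE_def Pi_def extensional_def)
    thus "f \<in> (\<lambda>(a, b). a(k := b)) ` ?S" using f
      by (intro image_eqI[where x="(f(k := undefined), f k)"]) auto
  qed (auto simp: PiE_def Pi_def extensional_def)
  moreover have "inj_on (\<lambda>(a, b). a(k := b)) ?S"
  proof (rule inj_onI, clarify)
    fix a b a' b' assume h: "a \<in> PiE {0..<k} (\<lambda>_. B)" "a' \<in> PiE {0..<k} (\<lambda>_. B)"
      and e: "a(k := b) = a'(k := b')"
    have "a i = a' i" for i
      using fun_cong[OF e, of i] h by (cases "i = k") (auto simp: PiE_def extensional_def)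
    thus "a = a' \<and> b = b'" using fun_cong[OF e, of k] by auto
  qed
  ultimately have "card {f \<in> PiE {0..<Suc k} (\<lambda>_. B). P f} = card ?S"
    by (simp add: card_image)
  also have "\<dots> = (\<Sum>a \<in> PiE {0..<k} (\<lambda>_. B). card {b \<in> B. P (a(k := b))})"
    using B by (intro card_SigmaI) (auto intro: finite_PiE)
  finally show ?thesis .
qed

text \<open>The Gaussian binomial coefficients as natural numbers, via the \<open>q\<close>-Pascal rule.\<close>

fun qbinom :: "nat \<Rightarrow> nat \<Rightarrow> nat \<Rightarrow> nat" where
  "qbinom q 0 r = (if r = 0 then 1 else 0)"
| "qbinom q (Suc k) 0 = 1"
| "qbinom q (Suc k) (Suc r) = qbinom q k r + q ^ Suc r * qbinom q k (Suc r)"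

lemma qbinom_0_right [simp]: "qbinom q k 0 = 1"
  by (cases k) auto

context finite_field_embedding
begin

abbreviation tuples :: "nat \<Rightarrow> (nat \<Rightarrow> 'b) set" where
  "tuples k \<equiv> PiE {0..<k} (\<lambda>_. carrier K)"

definition rank_count :: "nat \<Rightarrow> nat \<Rightarrow> nat" where
  "rank_count k r = card {a \<in> tuples k. rank k a = r}"

lemma finite_tuples: "finite (tuples k)"
  using finite_K by (intro finite_PiE) auto

lemma lin_image_subset: "a \<in> {0..<k} \<rightarrow> carrier K \<Longrightarrow> lin_image k a \<subseteq> carrier K"
  using F_subspace_lin_image by (simp add: F_subspace_def)

lemma card_lin_image_le: "a \<in> {0..<k} \<rightarrow> carrier K \<Longrightarrow> card (lin_image k a) \<le> Q"
  using lin_image_subset finite_K by (simp add: card_mono)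

lemma card_rank_extend:
  assumes a: "a \<in> tuples k"
  shows "int (card {b \<in> carrier K. rank (Suc k) (a(k := b)) = r}) =
     (if rank k a = r then int q ^ r else 0)
   + (if Suc (rank k a) = r then int Q - int q ^ rank k a else 0)"
proof -
  have a': "a \<in> {0..<k} \<rightarrow> carrier K" using a by auto
  have img: "lin_image k (a(k := b)) = lin_image k a" for b
    using lin_form_coeff_upd[OF a'] by (auto simp: lin_image_def image_def)
  have rk: "rank (Suc k) (a(k := b)) = (if b \<in> lin_image k a then rank k a else Suc (rank k a))"
    if "b \<in> carrier K" for b
  proof -
    have "rank k (a(k := b)) = rank k a" unfolding rank_def using img by simp
    moreover have "a(k := b) \<in> {0..<Suc k} \<rightarrow> carrier K" using a' that by auto
    ultimately show ?thesis using rank_Suc[of "a(k := b)" k] img by simp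
  qed
  have "card {b \<in> carrier K. b \<in> lin_image k a} = q ^ rank k a"
    using lin_image_subset[OF a'] card_lin_image[OF a'] by (simp add: Int_absorb1 Int_def[symmetric]
        inf_commute Collect_conj_eq[symmetric])
  moreover have "int (card {b \<in> carrier K. b \<notin> lin_image k a}) = int Q - int q ^ rank k a"
  proof -
    have "card {b \<in> carrier K. b \<notin> lin_image k a} = Q - card (lin_image k a)"
      using lin_image_subset[OF a'] finite_lin_image
      by (simp add: card_Diff_subset set_diff_eq[symmetric])
    thus ?thesis using card_lin_image_le[OF a'] card_lin_image[OF a'] by (simp add: of_nat_diff)
  qed
  moreover have "{b \<in> carrier K. rank (Suc k) (a(k := b)) = r} =
    (if rank k a = r then {b \<in> carrier K. b \<in> lin_image k a}
     else if Suc (rank k a) = r then {b \<in> carrier K. b \<notin> lin_image k a} else {})"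
    using rk by (auto split: if_splits)
  ultimately show ?thesis by auto
qed

lemma rank_count_Suc:
  "int (rank_count (Suc k) r) = int q ^ r * int (rank_count k r)
   + (if r \<ge> 1 then (int Q - int q ^ (r - 1)) * int (rank_count k (r - 1)) else 0)"
proof -
  have "int (rank_count (Suc k) r)
      = (\<Sum>a \<in> tuples k. int (card {b \<in> carrier K. rank (Suc k) (a(k := b)) = r}))"
    unfolding rank_count_def using finite_K by (subst card_PiE_Suc_filter) auto
  also have "\<dots> = (\<Sum>a \<in> tuples k. (if rank k a = r then int q ^ r else 0)
        + (if rank k a = r - 1 \<and> r \<ge> 1 then int Q - int q ^ (r - 1) else 0))"
    by (intro sum.cong refl, subst card_rank_extend) auto
  also have "\<dots> = int q ^ r * int (rank_count k r)
      + (if r \<ge> 1 then (int Q - int q ^ (r - 1)) * int (rank_count k (r - 1)) else 0)"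
    unfolding sum.distrib rank_count_def using finite_tuples
    by (simp flip: sum.inter_filter add: mult.commute)
  finally show ?thesis .
qed

lemma rank_count_eq: "int (rank_count k r) = int (qbinom q k r) * (\<Prod>j<r. int Q - int q ^ j)"
proof (induct k arbitrary: r)
  case 0
  have "rank 0 (\<lambda>_. undefined) = 0" by (intro rank_eqI) (auto simp: lin_image_0)
  hence "{a \<in> tuples 0. rank 0 a = r} = (if r = 0 then {\<lambda>_. undefined} else {})" by auto
  thus ?case by (simp add: rank_count_def)
next
  case (Suc k)
  show ?case
  proof (cases r)
    case 0 thus ?thesis using rank_count_Suc[of k 0] Suc by simp
  next
    case (Suc r0)
    thus ?thesis using rank_count_Suc[of k "Suc r0"] Suc.hyps[of r0] Suc.hyps[of "Suc r0"]
      by (simp add: algebra_simps)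
  qed
qed

section \<open>The words of the extension code\<close>

definition word :: "nat \<Rightarrow> 'b \<Rightarrow> (nat \<Rightarrow> 'b) \<Rightarrow> (nat \<Rightarrow> 'a) \<Rightarrow> 'b" where
  "word k a0 a = (\<lambda>v. if v \<in> points k then a0 \<oplus> lin_form k a v else \<zero>)"

definition words :: "nat \<Rightarrow> ((nat \<Rightarrow> 'a) \<Rightarrow> 'b) set" where
  "words k = (\<lambda>(a0, a). word k a0 a) ` (carrier K \<times> tuples k)"

definition unit_point :: "nat \<Rightarrow> nat \<Rightarrow> 'a" where
  "unit_point i = (\<lambda>t. if t = i then \<one>\<^bsub>F\<^esub> else \<zero>\<^bsub>F\<^esub>)"

lemma unit_point_points: "i < k \<Longrightarrow> unit_point i \<in> points k"
  by (auto simp: unit_point_def points_def)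

lemma lin_form_unit_point:
  assumes a: "a \<in> {0..<k} \<rightarrow> carrier K" and i: "i < k"
  shows "lin_form k a (unit_point i) = a i"
proof -
  have "lin_form k a (unit_point i) = (\<Oplus>j\<in>{0..<k}. if i = j then a j else \<zero>)"
    unfolding lin_form_def unit_point_def using a by (intro K.finsum_cong') (auto simp: Pi_def)
  also have "\<dots> = a i" using a i by (intro K.finsum_singleton) auto
  finally show ?thesis .
qed

lemma inj_on_word: "inj_on (\<lambda>(a0, a). word k a0 a) (carrier K \<times> tuples k)"
proof (rule inj_onI, clarify)
  fix a0 a a0' a' assume h: "a0 \<in> carrier K" "a \<in> tuples k" "a0' \<in> carrier K" "a' \<in> tuples k"
    and e: "word k a0 a = word k a0' a'"
  have a: "a \<in> {0..<k} \<rightarrow> carrier K" "a' \<in> {0..<k} \<rightarrow> carrier K" using h by auto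
  have "a0 = a0'" using fun_cong[OF e, of "\<lambda>_. \<zero>\<^bsub>F\<^esub>"] h zero_point[of k]
    by (simp add: word_def lin_form_zero_point[OF a(1)] lin_form_zero_point[OF a(2)])
  moreover have "a = a'"
  proof (rule extensionalityI[where A="{0..<k}"])
    fix i assume i: "i \<in> {0..<k}"
    have "a0 \<oplus> a i = a0' \<oplus> a' i" using fun_cong[OF e, of "unit_point i"] i unit_point_points[of i k]
      by (simp add: word_def lin_form_unit_point[OF a(1)] lin_form_unit_point[OF a(2)])
    thus "a i = a' i" using \<open>a0 = a0'\<close> h i a by (metis K.a_comm K.add.right_cancel Pi_mem)
  qed (use h in \<open>auto simp: PiE_def\<close>)
  ultimately show "a0 = a0' \<and> a = a'" by simp
qed

lemma word_in_words:
  assumes a0: "a0 \<in> carrier K" and a: "a \<in> {0..<k} \<rightarrow> carrier K"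
  shows "word k a0 a \<in> words k"
proof -
  have "lin_form k (restrict a {0..<k}) v = lin_form k a v" if "v \<in> points k" for v
    unfolding lin_form_def using a that by (intro K.finsum_cong') (auto simp: points_carrier)
  hence "word k a0 a = word k a0 (restrict a {0..<k})" by (auto simp: word_def)
  thus ?thesis unfolding words_def using a0 a
    by (intro image_eqI[where x="(a0, restrict a {0..<k})"]) auto
qed

lemma lin_form_coeff_zero: "v \<in> points k \<Longrightarrow> lin_form k (\<lambda>_. \<zero>) v = \<zero>"
  unfolding lin_form_def by (simp add: points_carrier K.finsum_zero)

lemma lin_form_coeff_add:
  assumes "a \<in> {0..<k} \<rightarrow> carrier K" "b \<in> {0..<k} \<rightarrow> carrier K" "v \<in> points k"
  shows "lin_form k (\<lambda>i. a i \<oplus> b i) v = lin_form k a v \<oplus> lin_form k b v"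
proof -
  have "lin_form k (\<lambda>i. a i \<oplus> b i) v = (\<Oplus>i\<in>{0..<k}. a i \<otimes> \<sigma> (v i) \<oplus> b i \<otimes> \<sigma> (v i))"
    unfolding lin_form_def using assms
    by (intro K.finsum_cong') (auto simp: Pi_def points_carrier K.l_distr)
  thus ?thesis
    unfolding lin_form_def using assms by (simp add: K.finsum_addf Pi_def points_carrier)
qed

lemma lin_form_coeff_smult:
  assumes "x \<in> carrier K" "a \<in> {0..<k} \<rightarrow> carrier K" "v \<in> points k"
  shows "lin_form k (\<lambda>i. x \<otimes> a i) v = x \<otimes> lin_form k a v"
proof -
  have "lin_form k (\<lambda>i. x \<otimes> a i) v = (\<Oplus>i\<in>{0..<k}. x \<otimes> (a i \<otimes> \<sigma> (v i)))"
    unfolding lin_form_def using assms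
    by (intro K.finsum_cong') (auto simp: Pi_def points_carrier K.m_assoc)
  thus ?thesis
    unfolding lin_form_def using assms by (simp add: K.finsum_rdistr Pi_def points_carrier)
qed

lemma RM_code_Suc: "RM_code F (Suc k) = {c. \<exists>a0 \<in> carrier F. \<exists>a \<in> {0..<k} \<rightarrow> carrier F.
      (\<forall>v \<in> points k. c v = a0 \<oplus>\<^bsub>F\<^esub> (\<Oplus>\<^bsub>F\<^esub> i\<in>{0..<k}. a i \<otimes>\<^bsub>F\<^esub> v i)) \<and>
      (\<forall>v. v \<notin> points k \<longrightarrow> c v = \<zero>\<^bsub>F\<^esub>)}"
  by (simp add: RM_code_def RM_points_Suc)

lemma sigma_codeword:
  assumes "c \<in> RM_code F (Suc k)"
  shows "\<exists>b0\<in>carrier K. \<exists>b\<in>{0..<k} \<rightarrow> carrier K.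
    \<forall>v\<in>points k. c v \<in> carrier F \<and> \<sigma> (c v) = b0 \<oplus> lin_form k b v"
proof -
  obtain a0 a where a0: "a0 \<in> carrier F" and a: "a \<in> {0..<k} \<rightarrow> carrier F"
    and c: "\<forall>v \<in> points k. c v = a0 \<oplus>\<^bsub>F\<^esub> (\<Oplus>\<^bsub>F\<^esub> i\<in>{0..<k}. a i \<otimes>\<^bsub>F\<^esub> v i)"
    using assms unfolding RM_code_Suc by blast
  have "c v \<in> carrier F \<and> \<sigma> (c v) = \<sigma> a0 \<oplus> lin_form k (\<sigma> \<circ> a) v" if v: "v \<in> points k" for v
  proof -
    have f: "(\<lambda>i. a i \<otimes>\<^bsub>F\<^esub> v i) \<in> {0..<k} \<rightarrow> carrier F" using a v by (auto simp: points_carrier)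
    have "\<sigma> (\<Oplus>\<^bsub>F\<^esub> i\<in>{0..<k}. a i \<otimes>\<^bsub>F\<^esub> v i) = (\<Oplus>i\<in>{0..<k}. \<sigma> (a i \<otimes>\<^bsub>F\<^esub> v i))"
      using H.hom_finsum[OF f] by (simp add: comp_def)
    also have "\<dots> = lin_form k (\<sigma> \<circ> a) v"
      unfolding lin_form_def using a v by (intro K.finsum_cong') (auto simp: points_carrier Pi_def)
    finally have "\<sigma> (\<Oplus>\<^bsub>F\<^esub> i\<in>{0..<k}. a i \<otimes>\<^bsub>F\<^esub> v i) = lin_form k (\<sigma> \<circ> a) v" .
    moreover have "(\<Oplus>\<^bsub>F\<^esub> i\<in>{0..<k}. a i \<otimes>\<^bsub>F\<^esub> v i) \<in> carrier F" using f by (rule F.finsum_closed)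
    ultimately show ?thesis using c v a0 by (simp del: H.hom_finsum)
  qed
  moreover have "\<sigma> a0 \<in> carrier K" "\<sigma> \<circ> a \<in> {0..<k} \<rightarrow> carrier K" using a0 a by (auto simp: Pi_iff)
  ultimately show ?thesis by blast
qed

lemma codeword_closed: "c \<in> RM_code F (Suc k) \<Longrightarrow> v \<in> points k \<Longrightarrow> c v \<in> carrier F"
  using sigma_codeword by blast

lemma combination_affine:
  assumes "finite S" "S \<subseteq> RM_code F (Suc k)" "l \<in> S \<rightarrow> carrier K"
  shows "\<exists>a0\<in>carrier K. \<exists>a\<in>{0..<k} \<rightarrow> carrier K. \<forall>v\<in>points k.
           (\<Oplus>c\<in>S. l c \<otimes> \<sigma> (c v)) = a0 \<oplus> lin_form k a v"
  using assms
proof (induct S rule: finite_induct)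
  case empty
  show ?case by (intro bexI[of _ \<zero>] bexI[of _ "\<lambda>_. \<zero>"]) (auto simp: lin_form_coeff_zero)
next
  case (insert c S)
  have "S \<subseteq> RM_code F (Suc k)" "l \<in> S \<rightarrow> carrier K" using insert.prems by auto
  from insert.hyps(3)[OF this] obtain a0 a where a0: "a0 \<in> carrier K"
    and a: "a \<in> {0..<k} \<rightarrow> carrier K"
    and IH: "\<forall>v\<in>points k. (\<Oplus>c\<in>S. l c \<otimes> \<sigma> (c v)) = a0 \<oplus> lin_form k a v"
    by blast
  have c_code: "c \<in> RM_code F (Suc k)" using insert.prems(1) by simp
  obtain b0 b where b0: "b0 \<in> carrier K" and b: "b \<in> {0..<k} \<rightarrow> carrier K"
    and cv: "\<forall>v\<in>points k. c v \<in> carrier F \<and> \<sigma> (c v) = b0 \<oplus> lin_form k b v"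
    using sigma_codeword[OF c_code] by blast
  have x: "l c \<in> carrier K" using insert.prems(2) by auto
  have closed: "l c' \<otimes> \<sigma> (c' v) \<in> carrier K" if "c' \<in> insert c S" "v \<in> points k" for c' v
    using that insert.prems codeword_closed by blast
  show ?case
  proof (intro bexI[of _ "l c \<otimes> b0 \<oplus> a0"] bexI[of _ "\<lambda>i. l c \<otimes> b i \<oplus> a i"] ballI)
    fix v assume v: "v \<in> points k"
    have lb: "lin_form k b v \<in> carrier K" "lin_form k a v \<in> carrier K"
      using lin_form_closed a b v by auto
    have "(\<Oplus>c'\<in>insert c S. l c' \<otimes> \<sigma> (c' v)) = l c \<otimes> \<sigma> (c v) \<oplus> (\<Oplus>c'\<in>S. l c' \<otimes> \<sigma> (c' v))"
      using insert.hyps(1,2) v closed by (intro K.finsum_insert) auto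
    also have "\<dots> = l c \<otimes> (b0 \<oplus> lin_form k b v) \<oplus> (a0 \<oplus> lin_form k a v)"
      using cv IH v by simp
    also have "\<dots> = (l c \<otimes> b0 \<oplus> a0) \<oplus> (l c \<otimes> lin_form k b v \<oplus> lin_form k a v)"
      using x a0 b0 lb by algebra
    also have "\<dots> = (l c \<otimes> b0 \<oplus> a0) \<oplus> lin_form k (\<lambda>i. l c \<otimes> b i \<oplus> a i) v"
      using x a b v by (simp add: lin_form_coeff_add lin_form_coeff_smult Pi_def)
    finally show "(\<Oplus>c'\<in>insert c S. l c' \<otimes> \<sigma> (c' v)) = \<dots>" .
  qed (use x a0 b0 a b in auto)
qed

lemma ext_code_subset_words: "ext_code F K \<sigma> (points k) (RM_code F (Suc k)) \<subseteq> words k"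
proof
  fix c assume "c \<in> ext_code F K \<sigma> (points k) (RM_code F (Suc k))"
  then obtain S l where S: "S \<subseteq> RM_code F (Suc k)" "finite S" "l \<in> S \<rightarrow> carrier K"
    and cv: "\<forall>v\<in>points k. c v = (\<Oplus>c'\<in>S. l c' \<otimes> \<sigma> (c' v))"
    and co: "\<forall>v. v \<notin> points k \<longrightarrow> c v = \<zero>"
    unfolding ext_code_def by blast
  obtain a0 a where "a0 \<in> carrier K" "a \<in> {0..<k} \<rightarrow> carrier K"
    and "\<forall>v\<in>points k. (\<Oplus>c'\<in>S. l c' \<otimes> \<sigma> (c' v)) = a0 \<oplus> lin_form k a v"
    using combination_affine[OF S(2,1,3)] by blast
  moreover from this have "c = word k a0 a" using cv co by (intro ext) (auto simp: word_def)
  ultimately show "c \<in> words k" using word_in_words by simp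
qed

definition RM_one :: "nat \<Rightarrow> (nat \<Rightarrow> 'a) \<Rightarrow> 'a" where
  "RM_one k = (\<lambda>v. if v \<in> points k then \<one>\<^bsub>F\<^esub> else \<zero>\<^bsub>F\<^esub>)"

definition RM_coord :: "nat \<Rightarrow> nat \<Rightarrow> (nat \<Rightarrow> 'a) \<Rightarrow> 'a" where
  "RM_coord k i = (\<lambda>v. if v \<in> points k then v i else \<zero>\<^bsub>F\<^esub>)"

lemma RM_one_codeword: "RM_one k \<in> RM_code F (Suc k)"
proof -
  have "(\<Oplus>\<^bsub>F\<^esub>i\<in>{0..<k}. \<zero>\<^bsub>F\<^esub> \<otimes>\<^bsub>F\<^esub> v i) = \<zero>\<^bsub>F\<^esub>" if "v \<in> points k" for v
    using that by (simp add: points_carrier F.finsum_zero)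
  thus ?thesis unfolding RM_code_Suc
    by (intro CollectI bexI[of _ "\<one>\<^bsub>F\<^esub>"] bexI[of _ "\<lambda>_. \<zero>\<^bsub>F\<^esub>"]) (auto simp: RM_one_def)
qed

lemma RM_coord_codeword:
  assumes i: "i < k"
  shows "RM_coord k i \<in> RM_code F (Suc k)"
proof -
  let ?a = "\<lambda>j. if j = i then \<one>\<^bsub>F\<^esub> else \<zero>\<^bsub>F\<^esub>"
  have "(\<Oplus>\<^bsub>F\<^esub>j\<in>{0..<k}. ?a j \<otimes>\<^bsub>F\<^esub> v j) = v i" if v: "v \<in> points k" for v
  proof -
    have "(\<Oplus>\<^bsub>F\<^esub>j\<in>{0..<k}. ?a j \<otimes>\<^bsub>F\<^esub> v j) = (\<Oplus>\<^bsub>F\<^esub>j\<in>{0..<k}. if i = j then v j else \<zero>\<^bsub>F\<^esub>)"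
      using v by (intro F.finsum_cong') (auto simp: points_carrier)
    also have "\<dots> = v i" using i v by (intro F.finsum_singleton) (auto simp: points_carrier)
    finally show ?thesis .
  qed
  thus ?thesis unfolding RM_code_Suc
    by (intro CollectI bexI[of _ "\<zero>\<^bsub>F\<^esub>"] bexI[of _ ?a]) (auto simp: RM_coord_def points_carrier)
qed

lemma inj_on_RM_coord: "inj_on (RM_coord k) {0..<k}"
proof (rule inj_onI, rule ccontr)
  fix i j assume i: "i \<in> {0..<k}" and "RM_coord k i = RM_coord k j" "i \<noteq> j"
  moreover have "RM_coord k i (unit_point i) = \<one>\<^bsub>F\<^esub>" using i unit_point_points[of i k]
    by (simp add: RM_coord_def unit_point_def)
  ultimately have "RM_coord k j (unit_point i) = \<one>\<^bsub>F\<^esub>" by simp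
  thus False using \<open>i \<noteq> j\<close> i unit_point_points[of i k] by (simp add: RM_coord_def unit_point_def)
qed

lemma RM_one_not_coord: "RM_one k \<notin> RM_coord k ` {0..<k}"
proof
  assume "RM_one k \<in> RM_coord k ` {0..<k}"
  then obtain i where "RM_one k (\<lambda>_. \<zero>\<^bsub>F\<^esub>) = RM_coord k i (\<lambda>_. \<zero>\<^bsub>F\<^esub>)" by auto
  thus False using zero_point[of k] by (simp add: RM_one_def RM_coord_def)
qed

text \<open>The converse: \<open>word k a\<^sub>0 a\<close> is \<open>a\<^sub>0 \<sigma>(1) + \<Sum>\<^sub>i a\<^sub>i \<sigma>(x\<^sub>i)\<close> for the generators \<open>1, x\<^sub>i\<close>.\<close>

lemma word_in_ext_code:
  assumes a0: "a0 \<in> carrier K" and a: "a \<in> {0..<k} \<rightarrow> carrier K"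
  shows "word k a0 a \<in> ext_code F K \<sigma> (points k) (RM_code F (Suc k))"
proof -
  define S where "S = insert (RM_one k) (RM_coord k ` {0..<k})"
  define l where "l = (\<lambda>c. if c = RM_one k then a0 else a (inv_into {0..<k} (RM_coord k) c))"
  have S: "S \<subseteq> RM_code F (Suc k)" "finite S"
    unfolding S_def using RM_one_codeword RM_coord_codeword by auto
  have l: "l \<in> S \<rightarrow> carrier K"
    unfolding S_def l_def using a0 a inj_on_RM_coord by (auto simp: inv_into_f_f)
  have "word k a0 a v = (\<Oplus>c\<in>S. l c \<otimes> \<sigma> (c v))" if v: "v \<in> points k" for v
  proof -
    have cv: "c v \<in> carrier F" if "c \<in> S" for c
      using that v by (auto simp: S_def RM_one_def RM_coord_def points_carrier)
    have "(\<Oplus>c\<in>S. l c \<otimes> \<sigma> (c v))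
        = l (RM_one k) \<otimes> \<sigma> (RM_one k v) \<oplus> (\<Oplus>c\<in>RM_coord k ` {0..<k}. l c \<otimes> \<sigma> (c v))"
      unfolding S_def using RM_one_not_coord l cv unfolding S_def
      by (intro K.finsum_insert) (auto simp: Pi_def)
    also have "(\<Oplus>c\<in>RM_coord k ` {0..<k}. l c \<otimes> \<sigma> (c v))
        = (\<Oplus>i\<in>{0..<k}. l (RM_coord k i) \<otimes> \<sigma> (RM_coord k i v))"
      using l cv inj_on_RM_coord unfolding S_def by (intro K.finsum_reindex) (auto simp: Pi_def)
    also have "\<dots> = lin_form k a v"
      unfolding lin_form_def
    proof (intro K.finsum_cong' refl)
      fix i assume i: "i \<in> {0..<k}"
      have "RM_coord k i \<noteq> RM_one k" using RM_one_not_coord[of k] i by (metis imageI)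
      moreover have "inv_into {0..<k} (RM_coord k) (RM_coord k i) = i"
        using inj_on_RM_coord i by (simp add: inv_into_f_f)
      ultimately show "l (RM_coord k i) \<otimes> \<sigma> (RM_coord k i v) = a i \<otimes> \<sigma> (v i)"
        unfolding l_def using v by (simp add: RM_coord_def)
    qed (use a v points_carrier in auto)
    finally show ?thesis
      using v a0 by (simp add: word_def l_def RM_one_def)
  qed
  moreover have "\<forall>v. v \<notin> points k \<longrightarrow> word k a0 a v = \<zero>" by (simp add: word_def)
  ultimately show ?thesis unfolding ext_code_def
    using S l by (intro CollectI exI[of _ S] conjI bexI[of _ l]) auto
qed

lemma ext_code_eq_words: "ext_code F K \<sigma> (points k) (RM_code F (Suc k)) = words k"
proof
  show "words k \<subseteq> ext_code F K \<sigma> (points k) (RM_code F (Suc k))"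
    unfolding words_def by (auto intro!: word_in_ext_code)
qed (rule ext_code_subset_words)

lemma weight_word:
  assumes a: "a \<in> {0..<k} \<rightarrow> carrier K" and a0: "a0 \<in> carrier K"
  shows "ham_wt K (points k) (word k a0 a) =
    (if \<ominus> a0 \<in> lin_image k a then q ^ k - q ^ (k - rank k a) else q ^ k)"
proof -
  have "a0 \<oplus> x = \<zero> \<longleftrightarrow> x = \<ominus> a0" if "x \<in> carrier K" for x
    using a0 that by (metis K.add.inv_equality K.a_comm K.r_neg)
  hence "{v \<in> points k. word k a0 a v \<noteq> \<zero>} = points k - fibre k a (\<ominus> a0)"
    using lin_form_closed[OF a] by (auto simp: word_def fibre_def)
  hence "ham_wt K (points k) (word k a0 a) = q ^ k - card (fibre k a (\<ominus> a0))"
    unfolding ham_wt_def using finite_points card_points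
    by (simp add: card_Diff_subset finite_subset fibre_def)
  moreover have "\<ominus> a0 \<notin> lin_image k a \<Longrightarrow> fibre k a (\<ominus> a0) = {}"
    unfolding fibre_def lin_image_def by (force simp: image_iff)
  ultimately show ?thesis using card_fibre[OF a] by auto
qed

lemma card_weight_word:
  assumes a: "a \<in> tuples k"
  shows "int (card {a0 \<in> carrier K. ham_wt K (points k) (word k a0 a) = w}) =
    (if w = q ^ k - q ^ (k - rank k a) then int q ^ rank k a else 0)
  + (if w = q ^ k then int Q - int q ^ rank k a else 0)"
proof -
  have a': "a \<in> {0..<k} \<rightarrow> carrier K" using a by auto
  define r where "r = rank k a"
  have "0 < q ^ (k - r)" using q_ge_2 by simp
  moreover have "q ^ (k - r) \<le> q ^ k" using q_ge_2 by (intro power_increasing) auto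
  ultimately have ne: "q ^ k - q ^ (k - r) \<noteq> q ^ k" by linarith
  define Y where "Y = {a0 \<in> carrier K. \<ominus> a0 \<in> lin_image k a}"
  have sub: "lin_image k a \<subseteq> carrier K" using lin_image_subset[OF a'] .
  have "Y = (\<lambda>x. \<ominus> x) ` lin_image k a"
  proof (intro equalityI subsetI)
    fix y assume "y \<in> Y"
    hence "y \<in> carrier K" "\<ominus> y \<in> lin_image k a" by (auto simp: Y_def)
    thus "y \<in> (\<lambda>x. \<ominus> x) ` lin_image k a" by (intro image_eqI[where x="\<ominus> y"]) auto
  next
    fix y assume "y \<in> (\<lambda>x. \<ominus> x) ` lin_image k a"
    thus "y \<in> Y" using sub by (auto simp: Y_def)
  qed
  moreover have "inj_on (\<lambda>x. \<ominus> x) (lin_image k a)" using sub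
    by (intro inj_onI) (metis K.minus_minus subsetD)
  ultimately have cY: "card Y = q ^ r" using card_lin_image[OF a'] by (simp add: card_image r_def)
  have Yc: "Y \<subseteq> carrier K" by (auto simp: Y_def)
  have "{a0 \<in> carrier K. \<ominus> a0 \<notin> lin_image k a} = carrier K - Y" by (auto simp: Y_def)
  hence "card {a0 \<in> carrier K. \<ominus> a0 \<notin> lin_image k a} = Q - card Y"
    using Yc finite_K by (simp add: card_Diff_subset finite_subset)
  moreover have "card Y \<le> Q" using Yc finite_K by (simp add: card_mono)
  ultimately have cY': "int (card {a0 \<in> carrier K. \<ominus> a0 \<notin> lin_image k a}) = int Q - int q ^ r"
    using cY by (simp add: of_nat_diff)
  have "{a0 \<in> carrier K. ham_wt K (points k) (word k a0 a) = w} =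
    (if w = q ^ k - q ^ (k - r) then Y
     else if w = q ^ k then {a0 \<in> carrier K. \<ominus> a0 \<notin> lin_image k a} else {})"
    using weight_word[OF a'] ne by (auto simp: Y_def r_def split: if_splits)
  thus ?thesis using cY cY' ne by (simp add: r_def)
qed

lemma card_weight_ext_code:
  "int (card {c \<in> ext_code F K \<sigma> (points k) (RM_code F (Suc k)). ham_wt K (points k) c = w}) =
   (\<Sum>r\<le>k. int (qbinom q k r) * (\<Prod>j<r. int Q - int q ^ j) *
      ((if w = q ^ k - q ^ (k - r) then int q ^ r else 0)
     + (if w = q ^ k then int Q - int q ^ r else 0)))"
proof -
  define f where "f r = (if w = q ^ k - q ^ (k - r) then int q ^ r else 0)
     + (if w = q ^ k then int Q - int q ^ r else 0)" for r
  let ?S = "SIGMA a : tuples k. {a0 \<in> carrier K. ham_wt K (points k) (word k a0 a) = w}"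
  have "{c \<in> ext_code F K \<sigma> (points k) (RM_code F (Suc k)). ham_wt K (points k) c = w}
     = (\<lambda>(a, a0). word k a0 a) ` ?S"
    unfolding ext_code_eq_words words_def by auto
  moreover have "inj_on (\<lambda>(a, a0). word k a0 a) ?S"
    using inj_on_word[of k] by (auto simp: inj_on_def)
  ultimately have "int (card {c \<in> ext_code F K \<sigma> (points k) (RM_code F (Suc k)).
      ham_wt K (points k) c = w})
      = (\<Sum>a\<in>tuples k. int (card {a0 \<in> carrier K. ham_wt K (points k) (word k a0 a) = w}))"
    using finite_tuples finite_K by (simp add: card_image card_SigmaI)
  also have "\<dots> = (\<Sum>a\<in>tuples k. f (rank k a))"
    by (intro sum.cong refl) (simp add: card_weight_word f_def)
  also have "\<dots> = (\<Sum>r\<le>k. \<Sum>a\<in>{a \<in> tuples k. rank k a = r}. f (rank k a))"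
    using finite_tuples rank_le by (intro sum.group[symmetric]) (auto simp: PiE_def)
  also have "\<dots> = (\<Sum>r\<le>k. int (rank_count k r) * f r)"
    unfolding rank_count_def by (intro sum.cong refl) simp
  finally show ?thesis by (simp add: rank_count_eq f_def)
qed

end

section \<open>Finite extensions of a finite field\<close>

lemma (in field) finite_subfield_pow_card:
  assumes E: "subfield E R" "finite E" and e: "e \<in> E"
  shows "e [^] card E = e"
proof (cases "e = \<zero>")
  case True
  have "card {\<zero>, \<one>} \<le> card E" using E subringE(2,3)[OF subfieldE(1)[OF E(1)]]
    by (intro card_mono) auto
  thus ?thesis using True by (simp add: nat_pow_zero)
next
  case False
  let ?E = "R\<lparr>carrier := E\<rparr>"
  have fE: "field ?E" using subfield_iff(2)[OF E(1)] .
  interpret G: group "Multiplicative_Group.mult_of ?E" using field.field_mult_group[OF fE] .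
  have ec: "e \<in> carrier (Multiplicative_Group.mult_of ?E)" using e False by simp
  have "Coset.order (Multiplicative_Group.mult_of ?E) = card E - 1"
    using field.order_mult_of[OF fE] E(2) by (simp add: Coset.order_def)
  hence "e [^]\<^bsub>Multiplicative_Group.mult_of ?E\<^esub> (card E - 1) = \<one>"
    using G.pow_order_eq_1[OF ec] by simp
  hence "e [^] (card E - 1) = \<one>" by (simp add: Multiplicative_Group.nat_pow_mult_of nat_pow_consistent[symmetric])
  moreover have "card E > 0" using e E(2) by (auto simp: card_gt_0_iff)
  then obtain n where "card E = Suc n" using gr0_implies_Suc by blast
  moreover have "e \<in> carrier R" using e subfieldE(3)[OF E(1)] by auto
  ultimately show ?thesis by (simp add: nat_pow_Suc)
qed

lemma (in domain) pow_minus_self_plus_one_polynomial: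
  assumes "subring E R"
  shows "(monom \<one> (N - 2) @ [\<ominus> \<one>]) @ [\<one>] \<in> carrier (univ_poly R E)"
  using subringE[OF assms] one_not_zero
  unfolding univ_poly_carrier[symmetric] polynomial_def monom_def by auto

lemma (in ring) eval_pow_minus_self_plus_one:
  assumes N: "N \<ge> 2" and x: "x \<in> carrier R"
  shows "eval ((monom \<one> (N - 2) @ [\<ominus> \<one>]) @ [\<one>]) x = x [^] N \<oplus> \<ominus> x \<oplus> \<one>"
proof -
  have ms: "set (monom \<one> (N - 2)) \<subseteq> carrier R" by (auto simp: monom_def)
  hence ms': "set (monom \<one> (N - 2) @ [\<ominus> \<one>]) \<subseteq> carrier R" by auto
  have "eval ((monom \<one> (N - 2) @ [\<ominus> \<one>]) @ [\<one>]) x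
      = eval (monom \<one> (N - 2) @ [\<ominus> \<one>]) x \<otimes> x \<oplus> \<one>"
    by (rule eval_append_aux[OF ms' _ x]) simp
  also have "eval (monom \<one> (N - 2) @ [\<ominus> \<one>]) x = eval (monom \<one> (N - 2)) x \<otimes> x \<oplus> \<ominus> \<one>"
    by (rule eval_append_aux[OF ms _ x]) simp
  also have "eval (monom \<one> (N - 2)) x = \<one> \<otimes> x [^] (N - 2)"
    by (rule eval_monom) (simp_all add: x)
  finally have "eval ((monom \<one> (N - 2) @ [\<ominus> \<one>]) @ [\<one>]) x
      = ((\<one> \<otimes> x [^] (N - 2)) \<otimes> x \<oplus> \<ominus> \<one>) \<otimes> x \<oplus> \<one>" .
  moreover have "x [^] N = x [^] (N - 2) \<otimes> x \<otimes> x"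
  proof -
    have N': "N = Suc (Suc (N - 2))" using N by simp
    show ?thesis by (subst (1) N') (simp only: nat_pow_Suc)
  qed
  moreover have "x [^] (N - 2) \<in> carrier R" using x by simp
  ultimately show ?thesis using x by algebra
qed

text \<open>The polynomial \<open>x\<^sup>N - x + 1\<close>, \<open>N = |E|\<close>, is constantly \<open>1\<close> on \<open>E\<close>, so its roots lie outside \<open>E\<close>.\<close>

lemma (in algebraically_closed) exists_algebraic_outside_finite_subfield:
  assumes E: "subfield E L" "finite E"
  obtains \<alpha> where "\<alpha> \<in> carrier L" "(algebraic over E) \<alpha>" "\<alpha> \<notin> E"
proof -
  note sr = subringE[OF subfieldE(1)[OF E(1)]]
  define N where "N = card E"
  have N2: "N \<ge> 2"
  proof -
    have "card {\<zero>, \<one>} \<le> N" unfolding N_def using sr E(2) by (intro card_mono) auto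
    thus ?thesis using one_not_zero by simp
  qed
  define p where "p = (monom \<one> (N - 2) @ [\<ominus> \<one>]) @ [\<one>]"
  have p_polyE: "p \<in> carrier (univ_poly L E)"
    unfolding p_def by (rule pow_minus_self_plus_one_polynomial[OF subfieldE(1)[OF E(1)]])
  have p_poly: "p \<in> carrier (poly_ring L)"
    unfolding p_def by (rule pow_minus_self_plus_one_polynomial[OF carrier_is_subring])
  have "size (roots p) = N"
    using roots_over_carrier[OF p_poly] N2 unfolding splitted_def p_def monom_def by simp
  then obtain \<alpha> where "\<alpha> \<in># roots p" using N2 by (metis gr_zeroI multiset_nonemptyE
        not_numeral_le_zero size_empty)
  hence \<alpha>: "\<alpha> \<in> carrier L" "eval p \<alpha> = \<zero>"
    using roots_mem_iff_is_root[OF p_poly] unfolding is_root_def by auto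
  show thesis
  proof
    show "\<alpha> \<in> carrier L" "(algebraic over E) \<alpha>"
      using \<alpha> algebraicI[OF p_polyE _ \<alpha>(2)] by (auto simp: p_def)
    show "\<alpha> \<notin> E"
    proof
      assume "\<alpha> \<in> E"
      hence "eval p \<alpha> = \<one>"
        using eval_pow_minus_self_plus_one[OF N2 \<alpha>(1)] finite_subfield_pow_card[OF E] \<alpha>(1)
        by (simp add: p_def N_def r_neg)
      thus False using \<alpha>(2) one_not_zero by simp
    qed
  qed
qed

lemma (in domain) finite_simple_extension:
  assumes E: "subfield E R" "finite E" and \<alpha>: "\<alpha> \<in> carrier R" "(algebraic over E) \<alpha>"
  shows "finite (simple_extension E \<alpha>)"
proof -
  let ?Us = "exp_base \<alpha> (degree (Irr E \<alpha>))"
  have "simple_extension E \<alpha> = Span E ?Us" using Span_exp_base[OF E(1) \<alpha>] by simp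
  also have "\<dots> = (\<lambda>Ks. combine Ks ?Us) ` {Ks. set Ks \<subseteq> E \<and> length Ks = length ?Us}"
    using Span_eq_combine_set_length_version[OF E(1) exp_base_closed[OF \<alpha>(1)]] by auto
  finally show ?thesis using finite_lists_length_eq[OF E(2)] by simp
qed

lemma (in algebraically_closed) finite_subfield_card_unbounded:
  assumes E0: "subfield E0 L" "finite E0"
  shows "\<exists>E. subfield E L \<and> E0 \<subseteq> E \<and> finite E \<and> n < card E"
proof (induct n)
  case 0
  have "card E0 > 0" using E0 subringE(2)[OF subfieldE(1)[OF E0(1)]] card_gt_0_iff by blast
  thus ?case using E0 by blast
next
  case (Suc n)
  then obtain E where E: "subfield E L" "E0 \<subseteq> E" "finite E" "n < card E" by blast
  obtain \<alpha> where \<alpha>: "\<alpha> \<in> carrier L" "(algebraic over E) \<alpha>" "\<alpha> \<notin> E"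
    using exists_algebraic_outside_finite_subfield[OF E(1,3)] .
  let ?E' = "simple_extension E \<alpha>"
  have "subfield ?E' L" "E \<subseteq> ?E'" "\<alpha> \<in> ?E'" "finite ?E'"
    using simple_extension_is_subfield[OF E(1) \<alpha>(1)] \<alpha>(2)
      simple_extension_incl[OF subfieldE(3)[OF E(1)] \<alpha>(1)]
      simple_extension_mem[OF subfieldE(1)[OF E(1)] \<alpha>(1)]
      finite_simple_extension[OF E(1,3) \<alpha>(1,2)]
    by auto
  moreover from this have "card E < card ?E'" using \<alpha>(3) by (intro psubset_card_mono) auto
  ultimately show ?case using E by (intro exI[of _ ?E']) auto
qed

lemma ring_hom_restrict_carrier:
  "h \<in> ring_hom R S \<Longrightarrow> h ` carrier R \<subseteq> E \<Longrightarrow> h \<in> ring_hom R (S\<lparr>carrier := E\<rparr>)"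
  unfolding ring_hom_def by auto

text \<open>A finite field containing an image of \<open>F\<close> is an \<open>F\<close>-subspace of itself.\<close>

lemma subfield_card_power:
  fixes F :: "('a, 'c) ring_scheme" and L :: "('b, 'd) ring_scheme"
  assumes F: "field F" "finite (carrier F)" and L: "field L" and h: "h \<in> ring_hom F L"
    and E: "subfield E L" "h ` carrier F \<subseteq> E" "finite E"
  shows "\<exists>r. card E = card (carrier F) ^ r"
proof -
  interpret L: field L by fact
  interpret R: finite_field_embedding F "L\<lparr>carrier := E\<rparr>" h
    using F L.subfield_iff(2)[OF E(1)] ring_hom_restrict_carrier[OF h E(2)] E(3)
    by (simp add: finite_field_embedding_def finite_field_embedding_axioms_def)
  have "R.F_subspace E"
    unfolding R.F_subspace_def using subringE[OF subfieldE(1)[OF E(1)]] E(2) by auto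
  thus ?thesis using R.F_subspace_card_power by blast
qed

lemma finite_field_nat_copy:
  fixes R :: "('b, 'd) ring_scheme"
  assumes R: "field R" "finite (carrier R)"
  obtains K :: "nat ring" and f where "field K" "card (carrier K) = card (carrier R)"
    "f \<in> ring_hom R K"
proof -
  obtain f :: "_ \<Rightarrow> nat" and n where f: "f ` carrier R = {i. i < n}" "inj_on f (carrier R)"
    using finite_imp_inj_to_nat_seg[OF R(2)] by blast
  show thesis
  proof
    show "field (image_ring f R)" using field.inj_imp_image_ring_is_field[OF R(1) f(2)] .
    show "card (carrier (image_ring f R)) = card (carrier R)"
      unfolding image_ring_carrier using f(2) by (simp add: card_image)
    show "f \<in> ring_hom R (image_ring f R)"
      using inj_imp_image_ring_iso[OF f(2)] unfolding ring_iso_def by auto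
  qed
qed

lemma exists_finite_extension:
  fixes F :: "'a ring"
  assumes F: "field F" "finite (carrier F)"
  shows "\<exists>m>M. \<exists>(K :: nat ring) \<sigma>. field K \<and> card (carrier K) = card (carrier F) ^ m
           \<and> \<sigma> \<in> ring_hom F K"
proof -
  interpret F: field F by fact
  obtain L :: "((('a list \<times> nat) multiset) \<Rightarrow> 'a) ring"
    where alg: "algebraic_closure L (F.indexed_const ` carrier F)"
      and h: "F.indexed_const \<in> ring_hom F L"
    by (rule F.exists_closure)
  interpret L: algebraic_closure L "F.indexed_const ` carrier F" by fact
  have "subfield (F.indexed_const ` carrier F) L"
    using ring_hom_ring.img_is_subfield(2)[OF ring_hom_ringI2[OF F.ring_axioms L.ring_axioms h]
        F.carrier_is_subfield L.one_not_zero] .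
  then obtain E where E: "subfield E L" "F.indexed_const ` carrier F \<subseteq> E" "finite E"
      "card (carrier F) ^ M < card E"
    using L.finite_subfield_card_unbounded F(2) by blast
  obtain r where r: "card E = card (carrier F) ^ r"
    using subfield_card_power[OF F L.field_axioms h E(1-3)] by blast
  have "M < r"
    using E(4) field_card_ge_2[OF F] unfolding r by (simp add: power_less_imp_less_exp)
  obtain K :: "nat ring" and f where
    K: "field K" "card (carrier K) = card E" "f \<in> ring_hom (L\<lparr>carrier := E\<rparr>) K"
    using finite_field_nat_copy[OF L.subfield_iff(2)[OF E(1)]] E(3) by auto
  have "f \<circ> F.indexed_const \<in> ring_hom F K"
    using ring_hom_trans[OF ring_hom_restrict_carrier[OF h E(2)] K(3)] .
  thus ?thesis using \<open>M < r\<close> K(1,2) r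
    by (intro exI[of _ r] conjI exI[of _ K] exI[of _ "f \<circ> F.indexed_const"]) auto
qed

section \<open>Gaussian binomial coefficients\<close>

lemma gauss_binom_prod_div: "b \<le> a \<Longrightarrow> gauss_binom q a b =
   (\<Prod>i<b. real q ^ (a - i) - 1) / (\<Prod>i<b. real q ^ (i + 1) - 1)"
  unfolding gauss_binom_def by (simp add: prod_dividef)

lemma q_power_minus_1_nonzero: "q \<ge> 2 \<Longrightarrow> real q ^ Suc i - 1 \<noteq> 0"
  using one_less_power[of "real q" "Suc i"] by simp

lemma gauss_binom_pascal:
  assumes q: "q \<ge> 2"
  shows "gauss_binom q (Suc k) (Suc r) = gauss_binom q k r + real q ^ Suc r * gauss_binom q k (Suc r)"
proof (cases "r \<le> k")
  case False thus ?thesis by (simp add: gauss_binom_def)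
next
  case True
  define P where "P = (\<Prod>i<r. real q ^ (k - i) - 1) / (\<Prod>i<r. real q ^ (i + 1) - 1)"
  have d: "real q ^ Suc r - 1 \<noteq> 0" "(\<Prod>i<r. real q ^ (i + 1) - 1) \<noteq> 0"
    using q_power_minus_1_nonzero[OF q] by (auto simp: prod_zero_iff)
  have G: "gauss_binom q k r = P" using True by (simp add: gauss_binom_prod_div P_def)
  have num: "(\<Prod>i<Suc r. real q ^ (Suc k - i) - 1) = (real q ^ Suc k - 1) * (\<Prod>i<r. real q ^ (k - i) - 1)"
    by (subst prod.lessThan_Suc_shift) simp
  have den: "(\<Prod>i<Suc r. real q ^ (i + 1) - 1) = (real q ^ Suc r - 1) * (\<Prod>i<r. real q ^ (i + 1) - 1)"
    by simp
  have "gauss_binom q (Suc k) (Suc r)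
      = (\<Prod>i<Suc r. real q ^ (Suc k - i) - 1) / (\<Prod>i<Suc r. real q ^ (i + 1) - 1)"
    using True by (intro gauss_binom_prod_div) simp
  also have "\<dots> = (real q ^ Suc k - 1) / (real q ^ Suc r - 1) * P"
    unfolding num den P_def by (simp only: times_divide_times_eq)
  finally have A: "gauss_binom q (Suc k) (Suc r) = (real q ^ Suc k - 1) / (real q ^ Suc r - 1) * P" .
  have B: "gauss_binom q k (Suc r) = P * (real q ^ (k - r) - 1) / (real q ^ Suc r - 1)"
  proof (cases "r = k")
    case True thus ?thesis by (simp add: gauss_binom_def)
  next
    case False thus ?thesis using \<open>r \<le> k\<close> d by (simp add: gauss_binom_prod_div P_def)
  qed
  have "gauss_binom q k r + real q ^ Suc r * gauss_binom q k (Suc r)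
      = P * (real q ^ Suc r - 1 + real q ^ Suc r * (real q ^ (k - r) - 1)) / (real q ^ Suc r - 1)"
    unfolding G B using d(1) by (simp add: field_simps)
  also have "real q ^ Suc r - 1 + real q ^ Suc r * (real q ^ (k - r) - 1) = real q ^ Suc k - 1"
    using True by (simp add: algebra_simps flip: power_add)
  finally show ?thesis using A by simp
qed

lemma real_qbinom: "q \<ge> 2 \<Longrightarrow> real (qbinom q k r) = gauss_binom q k r"
proof (induct k arbitrary: r)
  case 0 thus ?case by (simp add: gauss_binom_def)
next
  case (Suc k) thus ?case
    by (cases r) (simp_all add: gauss_binom_def[of _ _ 0] gauss_binom_pascal)
qed

section \<open>The polynomials \<open>A\<^sub>w\<close>\<close>

definition RM_weight_poly :: "nat \<Rightarrow> nat \<Rightarrow> nat \<Rightarrow> 'r::comm_ring_1 poly" where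
  "RM_weight_poly q k w = (\<Sum>r\<le>k. Polynomial.smult (of_nat (qbinom q k r)) (\<Prod>j<r. [:- of_nat (q ^ j), 1:]) *
      ([: if w = q ^ k - q ^ (k - r) then of_nat (q ^ r) else 0 :]
       + (if w = q ^ k then [:- of_nat (q ^ r), 1:] else 0)))"

lemma poly_RM_weight_poly:
  "poly (RM_weight_poly q k w) x = (\<Sum>r\<le>k. of_nat (qbinom q k r) * (\<Prod>j<r. x - of_nat (q ^ j)) *
   ((if w = q ^ k - q ^ (k - r) then of_nat (q ^ r) else 0)
  + (if w = q ^ k then x - of_nat (q ^ r) else 0)))"
proof -
  have "poly (if b then p else 0) x = (if b then poly p x else 0)" for b p by simp
  thus ?thesis by (simp add: RM_weight_poly_def poly_sum poly_prod mult.assoc cong: if_cong)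
qed

lemma poly_eqI_infinite:
  fixes p p' :: "'a::idom poly"
  assumes "infinite {x. poly p x = poly p' x}"
  shows "p = p'"
proof -
  have "infinite {x. poly (p - p') x = 0}" using assms by simp
  hence "p - p' = 0" using poly_roots_finite by blast
  thus ?thesis by simp
qed

lemma poly_map_of_int:
  "poly (map_poly (of_int :: int \<Rightarrow> 'a::comm_ring_1) p) (of_int x) = of_int (poly p x)"
  by (induct p) (auto simp: map_poly_pCons)

lemma map_poly_of_int_RM_weight_poly:
  "map_poly real_of_int (RM_weight_poly q k w) = RM_weight_poly q k w"
proof (rule poly_eqI_infinite)
  have "range real_of_int \<subseteq> {x. poly (map_poly real_of_int (RM_weight_poly q k w)) x =
      poly (RM_weight_poly q k w) x}"
    by (auto simp: poly_map_of_int poly_RM_weight_poly of_int_sum of_int_prod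
        if_distrib[where f=real_of_int] cong: if_cong)
  moreover have "infinite (range real_of_int)"
    using infinite_UNIV_int by (simp add: finite_image_iff inj_on_def)
  ultimately show "infinite {x. poly (map_poly real_of_int (RM_weight_poly q k w)) x =
      poly (RM_weight_poly q k w) x}"
    using finite_subset by blast
qed

lemma card_weight_RM_ext:
  fixes F :: "'a ring" and K :: "nat ring"
  assumes F: "field F" "finite (carrier F)" and K: "field K" "card (carrier K) = card (carrier F) ^ m"
    and \<sigma>: "\<sigma> \<in> ring_hom F K"
  shows "int (card {c \<in> ext_code F K \<sigma> (RM_points F (Suc k)) (RM_code F (Suc k)).
             ham_wt K (RM_points F (Suc k)) c = w})
       = poly (RM_weight_poly (card (carrier F)) k w) (int (card (carrier F) ^ m))"
proof -
  have "finite (carrier K)"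
    using K(2) field_card_ge_2[OF F] by (intro card_ge_0_finite) simp
  then interpret finite_field_embedding F K \<sigma>
    using F K \<sigma> by (simp add: finite_field_embedding_def finite_field_embedding_axioms_def)
  show ?thesis
    unfolding RM_points_Suc card_weight_ext_code K(2)[symmetric]
    by (simp add: poly_RM_weight_poly cong: if_cong)
qed

lemma RM_ext_A_eq:
  fixes F :: "'a ring"
  assumes F: "field F" "finite (carrier F)"
  shows "RM_ext_A F (Suc k) w = RM_weight_poly (card (carrier F)) k w"
  unfolding RM_ext_A_def
proof (rule the_equality)
  let ?q = "card (carrier F)"
  show "\<forall>m\<ge>1. \<forall>(K :: nat ring) \<sigma>. field K \<and> card (carrier K) = ?q ^ m \<and> \<sigma> \<in> ring_hom F K \<longrightarrow>
      int (card {c \<in> ext_code F K \<sigma> (RM_points F (Suc k)) (RM_code F (Suc k)).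
                   ham_wt K (RM_points F (Suc k)) c = w}) = poly (RM_weight_poly ?q k w) (int (?q ^ m))"
    using card_weight_RM_ext[OF F] by blast
  fix A assume A: "\<forall>m\<ge>1. \<forall>(K :: nat ring) \<sigma>. field K \<and> card (carrier K) = ?q ^ m \<and> \<sigma> \<in> ring_hom F K \<longrightarrow>
      int (card {c \<in> ext_code F K \<sigma> (RM_points F (Suc k)) (RM_code F (Suc k)).
                   ham_wt K (RM_points F (Suc k)) c = w}) = poly A (int (?q ^ m))"
  have "\<exists>m>M. poly A (int (?q ^ m)) = poly (RM_weight_poly ?q k w) (int (?q ^ m))" for M
  proof -
    obtain m and K :: "nat ring" and \<sigma> where
      m: "m > M" and K: "field K" "card (carrier K) = ?q ^ m" and \<sigma>: "\<sigma> \<in> ring_hom F K"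
      using exists_finite_extension[OF F, of M] by blast
    have "m \<ge> 1" using m by simp
    hence "poly A (int (?q ^ m)) = poly (RM_weight_poly ?q k w) (int (?q ^ m))"
      using A K \<sigma> card_weight_RM_ext[OF F K \<sigma>, of k w] by simp
    thus ?thesis using m by blast
  qed
  hence "infinite {m. poly A (int (?q ^ m)) = poly (RM_weight_poly ?q k w) (int (?q ^ m))}"
    unfolding infinite_nat_iff_unbounded by blast
  moreover have "inj (\<lambda>m. int (?q ^ m))"
    using field_card_ge_2[OF F] by (auto simp: inj_on_def power_inject_exp)
  ultimately have "infinite ((\<lambda>m. int (?q ^ m)) `
      {m. poly A (int (?q ^ m)) = poly (RM_weight_poly ?q k w) (int (?q ^ m))})"
    by (simp add: finite_image_iff inj_on_subset)
  moreover have "(\<lambda>m. int (?q ^ m)) ` {m. poly A (int (?q ^ m)) = poly (RM_weight_poly ?q k w) (int (?q ^ m))}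
      \<subseteq> {x. poly A x = poly (RM_weight_poly ?q k w) x}" by auto
  ultimately have "infinite {x. poly A x = poly (RM_weight_poly ?q k w) x}"
    using finite_subset by blast
  thus "A = RM_weight_poly ?q k w" by (rule poly_eqI_infinite)
qed

lemma sum_two_indicators:
  fixes u v X Y :: "'a::comm_semiring_1"
  assumes "i \<le> n" "j \<le> n"
  shows "(\<Sum>w=0..n. ((if w = i then u else 0) + (if w = j then v else 0)) * X ^ (n - w) * Y ^ w)
       = u * X ^ (n - i) * Y ^ i + v * X ^ (n - j) * Y ^ j"
proof -
  have "(\<Sum>w=0..n. ((if w = i then u else 0) + (if w = j then v else 0)) * X ^ (n - w) * Y ^ w)
      = (\<Sum>w=0..n. (if w = i then u * X ^ (n - w) * Y ^ w else 0)
                    + (if w = j then v * X ^ (n - w) * Y ^ w else 0))"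
    by (intro sum.cong) (auto simp: distrib_right)
  thus ?thesis using assms by (simp add: sum.distrib)
qed

lemma sum_RM_weight_indicators:
  fixes u v X Y :: "'a::comm_semiring_1"
  assumes "q > 0"
  shows "(\<Sum>w=0..q^k. ((if w = q ^ k - q ^ (k - r) then u else 0) + (if w = q ^ k then v else 0))
           * X ^ (q ^ k - w) * Y ^ w)
       = u * X ^ (q ^ (k - r)) * Y ^ (q ^ k - q ^ (k - r)) + v * Y ^ (q ^ k)"
proof -
  have "q ^ (k - r) \<le> q ^ k" using assms by (intro power_increasing) auto
  thus ?thesis by (simp add: sum_two_indicators)
qed

lemma poly_RM_weight_poly_real:
  assumes q: "q \<ge> 2"
  shows "poly (RM_weight_poly q k w) (T :: real) = (\<Sum>r\<le>k. gauss_binom q k r * (\<Prod>j<r. T - real q ^ j) *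
    ((if w = q ^ k - q ^ (k - r) then real q ^ r else 0) + (if w = q ^ k then T - real q ^ r else 0)))"
  by (simp add: poly_RM_weight_poly real_qbinom[OF q] cong: if_cong)

lemma RM_ext_W_sum:
  fixes T X Y :: real and q k :: nat
  assumes q: "q \<ge> 2"
  shows "(\<Sum>w=0..q^k. poly (RM_weight_poly q k w) T * X ^ (q ^ k - w) * Y ^ w)
   = (\<Sum>r = 1..Suc k. (\<Prod>j<r. T - real q ^ j) * gauss_binom q k (r - 1)) * Y ^ (q ^ k)
    + (\<Sum>r = 0..k. (\<Prod>j<r. T - real q ^ j) * real q ^ r * gauss_binom q k r
         * X ^ (q ^ (k - r)) * Y ^ (q ^ k - q ^ (k - r)))"
proof -
  define n where "n = q ^ k"
  define G where "G r = gauss_binom q k r * (\<Prod>j<r. T - real q ^ j)" for r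
  define ind where "ind r w = (if w = n - q ^ (k - r) then real q ^ r else 0)
      + (if w = n then T - real q ^ r else 0)" for r w
  have "(\<Sum>w=0..n. poly (RM_weight_poly q k w) T * X ^ (n - w) * Y ^ w)
      = (\<Sum>w=0..n. \<Sum>r\<le>k. G r * (ind r w * X ^ (n - w) * Y ^ w))"
    by (simp add: poly_RM_weight_poly_real[OF q] G_def ind_def n_def sum_distrib_right mult.assoc)
  also have "\<dots> = (\<Sum>r\<le>k. G r * (\<Sum>w=0..n. ind r w * X ^ (n - w) * Y ^ w))"
    by (subst sum.swap) (simp add: sum_distrib_left)
  also have "\<dots> = (\<Sum>r\<le>k. G r * (real q ^ r * X ^ (q ^ (k - r)) * Y ^ (n - q ^ (k - r))
      + (T - real q ^ r) * Y ^ n))"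
    using q by (simp add: ind_def n_def sum_RM_weight_indicators)
  also have "\<dots> = (\<Sum>r\<le>k. G r * (T - real q ^ r)) * Y ^ n
      + (\<Sum>r\<le>k. G r * real q ^ r * X ^ (q ^ (k - r)) * Y ^ (n - q ^ (k - r)))"
    by (simp add: sum.distrib sum_distrib_right distrib_left mult.assoc add.commute)
  also have "(\<Sum>r\<le>k. G r * (T - real q ^ r))
      = (\<Sum>r = 0..k. (\<Prod>j<Suc r. T - real q ^ j) * gauss_binom q k r)"
    by (simp add: G_def atLeast0AtMost mult_ac)
  also have "\<dots> = (\<Sum>r = 1..Suc k. (\<Prod>j<r. T - real q ^ j) * gauss_binom q k (r - 1))"
    by (simp only: One_nat_def sum.shift_bounds_cl_Suc_ivl diff_Suc_Suc minus_nat.diff_0)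
  finally show ?thesis by (simp add: G_def n_def atLeast0AtMost mult_ac)
qed

theorem mainTheorem6:
  fixes F :: "'a ring" and q s :: nat
  assumes "field F" and "finite (carrier F)" and "card (carrier F) = q" and "s \<ge> 1"
  shows "\<forall>X Y T :: real. RM_ext_W F s X Y T =
      (\<Sum>r = 1..s. (\<Prod>j<r. T - real q ^ j) * gauss_binom q (s - 1) (r - 1)) * Y ^ (q ^ (s - 1))
    + (\<Sum>r = 0..s - 1. (\<Prod>j<r. T - real q ^ j) * real q ^ r * gauss_binom q (s - 1) r
         * X ^ (q ^ (s - 1 - r)) * Y ^ (q ^ (s - 1) - q ^ (s - 1 - r)))"
proof (intro allI)
  fix X Y T :: real
  obtain k where s: "s = Suc k" using assms(4) by (cases s) auto
  have q: "q \<ge> 2" using field_card_ge_2[OF assms(1,2)] assms(3) by simp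
  have "RM_ext_W F s X Y T = (\<Sum>w=0..q^k. poly (RM_weight_poly q k w) T * X ^ (q ^ k - w) * Y ^ w)"
    unfolding RM_ext_W_def s using RM_ext_A_eq[OF assms(1,2)] assms(3)
    by (simp add: map_poly_of_int_RM_weight_poly)
  thus "RM_ext_W F s X Y T =
      (\<Sum>r = 1..s. (\<Prod>j<r. T - real q ^ j) * gauss_binom q (s - 1) (r - 1)) * Y ^ (q ^ (s - 1))
    + (\<Sum>r = 0..s - 1. (\<Prod>j<r. T - real q ^ j) * real q ^ r * gauss_binom q (s - 1) r
         * X ^ (q ^ (s - 1 - r)) * Y ^ (q ^ (s - 1) - q ^ (s - 1 - r)))"
    using RM_ext_W_sum[OF q] by (simp add: s)
qed

end
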